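(* Let $d=d_\ell+d_s$ and write $w\in\mathbb{R}^d$ as $w=(u,s)$ with $u\in\mathbb{R}^{d_\ell}$, $s\in\mathbb{R}^{d_s}$. Let $\mathcal{W}\subset\mathbb{R}^d$ be a closed convex set with finite diameter $D:=\sup_{w,w'\in\mathcal{W}}\|w-w'\|_2<\infty$. Let $\lambda_p,\lambda_s\ge 0$, and for $t=1,\dots,T$ let $f_t:\mathbb{R}^d\to\mathbb{R}$ be convex and $c_t\in\mathbb{R}^{d_\ell}$, and define \[ F_t(w)=f_t(w)+\lambda_p\|s\|_1+\frac{\lambda_s}{2}\|u-c_t\|_2^2 . \] Let $\eta>0$, $w_0\in\mathcal{W}$, and for $t=1,\dots,T$ let \[ w_t\in\arg\min_{w\in\mathcal{W}}\Big\{F_t(w)+\frac{1}{2\eta}\|w-w_{t-1}\|_2^2\Big\}. \] Then for any comparator sequence $\{v_t\}_{t=1}^T\subset\mathcal{W}$, with path length $V_T(\{v_t\}):=\sum_{t=2}^T\|v_t-v_{t-1}\|_2$, \[ \sum_{t=1}^{T}\big(F_t(w_t)-F_t(v_t)\big)\;\le\;\frac{1}{2\eta}\|v_1-w_0\|_2^2+\frac{D}{\eta}\,V_T(\{v_t\}). \] In particular, if $w_t^\star\in\arg\min_{w\in\mathcal{W}}F_t(w)$ for each $t$ and $V_T^\star:=\sum_{t=2}^T\|w_t^\star-w_{t-1}^\star\|_2$, then \[ \sum_{t=1}^{T}\big(F_t(w_t)-F_t(w_t^\star)\big)\;\le\;\frac{1}{2\eta}\|w_1^\star-w_0\|_2^2+\frac{D}{\eta}\,V_T^\star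 . \]
   Context: $\|\cdot\|_2$ is the Euclidean norm and $\|\cdot\|_1$ the $\ell_1$ norm. (The comparator points are denoted $u_t$ in the paper; they are renamed $v_t$ here to avoid a clash with the block $u$ of $w$.) *)

theory Defs
  imports "HOL-Analysis.Analysis"
begin

definition l1norm :: "real ^ 'n \<Rightarrow> real" where
  "l1norm s = (\<Sum>i\<in>UNIV. \<bar>s $ i\<bar>)"

text \<open>The composite loss F_t(w) = f_t(w) + lambda_p ||s||_1 + lambda_s/2 ||u - c_t||_2^2,
  where w = (u, s).  The product of Euclidean spaces carries the Euclidean norm.\<close>
definition Floss :: "real \<Rightarrow> real \<Rightarrow> ((real ^ 'l) \<times> (real ^ 's) \<Rightarrow> real) \<Rightarrow> real ^ 'l
    \<Rightarrow> (real ^ 'l) \<times> (real ^ 's) \<Rightarrow> real" where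
  "Floss lp ls f c w = f w + lp * l1norm (snd w) + ls / 2 * (norm (fst w - c))\<^sup>2"

definition path_length :: "nat \<Rightarrow> (nat \<Rightarrow> 'a::real_normed_vector) \<Rightarrow> real" where
  "path_length T v = (\<Sum>t=2..T. norm (v t - v (t - 1)))"

end

theory Submission
  imports Defs
begin

text \<open>Each proximal step satisfies the three-point inequality
  F_t(w_t) - F_t(v) <= (||v - w_(t-1)||^2 - ||v - w_t||^2) / (2 eta) for every v in W, because the
  proximal objective is (1/eta)-strongly convex. Summing with v = v_t, the right-hand sides
  telescope up to the mismatches ||v_t - w_(t-1)||^2 - ||v_(t-1) - w_(t-1)||^2, each at most
  2 D ||v_t - v_(t-1)|| since all points lie in W.\<close>

lemma power2_norm_convex_combination:
  fixes a b :: "'a::real_inner"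
  shows "(norm ((1 - t) *\<^sub>R a + t *\<^sub>R b))\<^sup>2
    = (1 - t) * (norm a)\<^sup>2 + t * (norm b)\<^sup>2 - t * (1 - t) * (norm (b - a))\<^sup>2"
  by (simp only: power2_norm_eq_inner) (simp add: inner_simps algebra_simps)

lemma convex_on_power2_norm_diff: "convex_on UNIV (\<lambda>x::'a::real_inner. (norm (x - c))\<^sup>2)"
proof (rule convex_onI)
  fix t :: real and x y :: 'a
  assume t: "0 < t" "t < 1"
  have "(1 - t) *\<^sub>R x + t *\<^sub>R y - c = (1 - t) *\<^sub>R (x - c) + t *\<^sub>R (y - c)"
    by (simp add: algebra_simps)
  then have "(norm ((1 - t) *\<^sub>R x + t *\<^sub>R y - c))\<^sup>2
      = (1 - t) * (norm (x - c))\<^sup>2 + t * (norm (y - c))\<^sup>2 - t * (1 - t) * (norm (y - x))\<^sup>2"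
    using power2_norm_convex_combination[of t "x - c" "y - c"] by simp
  moreover have "t * (1 - t) * (norm (y - x))\<^sup>2 \<ge> 0"
    using t by simp
  ultimately show "(norm ((1 - t) *\<^sub>R x + t *\<^sub>R y - c))\<^sup>2
      \<le> (1 - t) * (norm (x - c))\<^sup>2 + t * (norm (y - c))\<^sup>2"
    by linarith
qed simp

lemma convex_on_compose_linear:
  assumes "linear g" and "convex_on UNIV f"
  shows "convex_on UNIV (\<lambda>x. f (g x))"
proof (rule convex_onI)
  fix t :: real and x y
  assume "0 < t" "t < 1"
  then show "f (g ((1 - t) *\<^sub>R x + t *\<^sub>R y)) \<le> (1 - t) * f (g x) + t * f (g y)"
    using convex_onD[OF assms(2), of t "g x" "g y"]
    by (simp add: linear_add[OF assms(1)] linear_scale[OF assms(1)])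
qed simp

lemma convex_on_sum_fun:
  assumes "finite I" and "convex S" and "\<And>i. i \<in> I \<Longrightarrow> convex_on S (f i)"
  shows "convex_on S (\<lambda>x. \<Sum>i\<in>I. f i x)"
  using assms by (induction I rule: finite_induct) (auto simp: convex_on_const)

lemma convex_on_l1norm: "convex_on UNIV l1norm"
proof -
  have "convex_on UNIV (\<lambda>x::real. dist 0 x)"
    by (rule convex_on_dist) simp
  then have "convex_on UNIV (\<lambda>x::real ^ 'n. \<bar>x $ i\<bar>)" for i
    using convex_on_compose_linear[OF bounded_linear_vec_nth[THEN bounded_linear.linear]]
    by (simp add: dist_real_def)
  then show ?thesis
    unfolding l1norm_def[abs_def] by (intro convex_on_sum_fun) auto
qed

lemma convex_on_Floss:
  fixes f :: "(real ^ 'l) \<times> (real ^ 's) \<Rightarrow> real"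
  assumes "convex_on UNIV f" and "lp \<ge> 0" and "ls \<ge> 0"
  shows "convex_on UNIV (Floss lp ls f c)"
proof -
  have "convex_on UNIV (\<lambda>w::(real ^ 'l) \<times> (real ^ 's). l1norm (snd w))"
    by (rule convex_on_compose_linear[OF bounded_linear_snd[THEN bounded_linear.linear]
          convex_on_l1norm])
  moreover have "convex_on UNIV (\<lambda>w::(real ^ 'l) \<times> (real ^ 's). (norm (fst w - c))\<^sup>2)"
    by (rule convex_on_compose_linear[OF bounded_linear_fst[THEN bounded_linear.linear]
          convex_on_power2_norm_diff])
  ultimately show ?thesis
    unfolding Floss_def[abs_def] using assms by (intro convex_on_add convex_on_cmul) auto
qed

text \<open>Compare the minimiser x with the points (1 - theta) x + theta v: strong convexity of the
  objective G gives G x + (1 - theta) k ||v - x||^2 <= G v, and theta tends to 0.\<close>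
lemma is_arg_min_proximal_three_point:
  fixes F :: "'a::real_inner \<Rightarrow> real"
  assumes "convex_on W F" and "convex W" and "k \<ge> 0"
    and argmin: "is_arg_min (\<lambda>z. F z + k * (norm (z - y))\<^sup>2) (\<lambda>z. z \<in> W) x"
    and "v \<in> W"
  shows "F x + k * (norm (x - y))\<^sup>2 + k * (norm (v - x))\<^sup>2 \<le> F v + k * (norm (v - y))\<^sup>2"
proof -
  define G where "G z = F z + k * (norm (z - y))\<^sup>2" for z
  have "x \<in> W" and G_min: "\<And>z. z \<in> W \<Longrightarrow> G x \<le> G z"
    using argmin by (auto simp: is_arg_min_linorder G_def)
  have "s * (k * (norm (v - x))\<^sup>2) \<le> G v - G x" if s: "0 < s" "s < 1" for s
  proof -
    define \<theta> where "\<theta> = 1 - s"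
    define z where "z = (1 - \<theta>) *\<^sub>R x + \<theta> *\<^sub>R v"
    have \<theta>: "0 < \<theta>" "\<theta> < 1"
      using s by (auto simp: \<theta>_def)
    have "z \<in> W"
      unfolding z_def using \<theta> \<open>x \<in> W\<close> \<open>v \<in> W\<close> \<open>convex W\<close> by (intro convexD) auto
    have F_z: "F z \<le> (1 - \<theta>) * F x + \<theta> * F v"
      unfolding z_def using \<theta> \<open>x \<in> W\<close> \<open>v \<in> W\<close> by (intro convex_onD[OF assms(1)]) auto
    have "z - y = (1 - \<theta>) *\<^sub>R (x - y) + \<theta> *\<^sub>R (v - y)"
      unfolding z_def by (simp add: algebra_simps)
    then have norm_z: "(norm (z - y))\<^sup>2 = (1 - \<theta>) * (norm (x - y))\<^sup>2 + \<theta> * (norm (v - y))\<^sup>2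
        - \<theta> * (1 - \<theta>) * (norm (v - x))\<^sup>2"
      using power2_norm_convex_combination[of \<theta> "x - y" "v - y"] by simp
    have "G x \<le> G z"
      using G_min \<open>z \<in> W\<close> .
    also have "\<dots> \<le> (1 - \<theta>) * G x + \<theta> * G v - \<theta> * (s * (k * (norm (v - x))\<^sup>2))"
      using F_z unfolding G_def norm_z \<theta>_def by (simp add: algebra_simps)
    finally have "\<theta> * (s * (k * (norm (v - x))\<^sup>2)) \<le> \<theta> * (G v - G x)"
      by (simp add: algebra_simps)
    then show ?thesis
      using \<theta> by simp
  qed
  then have "k * (norm (v - x))\<^sup>2 \<le> G v - G x"
    by (rule field_le_mult_one_interval)
  then show ?thesis
    unfolding G_def by simp
qed

lemma power2_norm_diff_le_diameter:
  fixes a b x :: "'a::real_normed_vector"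
  assumes "bounded W" and "a \<in> W" "b \<in> W" "x \<in> W"
  shows "(norm (a - x))\<^sup>2 - (norm (b - x))\<^sup>2 \<le> 2 * diameter W * norm (a - b)"
proof -
  let ?A = "norm (a - x)" and ?B = "norm (b - x)"
  have "?A \<le> diameter W" "?B \<le> diameter W"
    using diameter_bounded_bound[OF assms(1)] assms(2-4) by (auto simp: dist_norm)
  moreover have "\<bar>?A - ?B\<bar> \<le> norm (a - b)"
    using norm_triangle_ineq3[of "a - x" "b - x"] by simp
  ultimately have "\<bar>?A - ?B\<bar> * (?A + ?B) \<le> norm (a - b) * (2 * diameter W)"
    by (intro mult_mono) auto
  moreover have "?A\<^sup>2 - ?B\<^sup>2 = (?A - ?B) * (?A + ?B)"
    by (simp add: power2_eq_square algebra_simps)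
  moreover have "(?A - ?B) * (?A + ?B) \<le> \<bar>?A - ?B\<bar> * (?A + ?B)"
    by (intro mult_right_mono) auto
  ultimately show ?thesis
    by (simp add: mult_ac)
qed

lemma sum_power2_norm_tracking_telescope:
  fixes v w :: "nat \<Rightarrow> 'a::real_normed_vector"
  assumes "T \<ge> 1" and "bounded W"
    and "\<And>t. t \<in> {1..T} \<Longrightarrow> v t \<in> W" and "\<And>t. t \<in> {1..T} \<Longrightarrow> w t \<in> W"
  shows "(\<Sum>t=1..T. (norm (v t - w (t - 1)))\<^sup>2 - (norm (v t - w t))\<^sup>2)
    \<le> (norm (v 1 - w 0))\<^sup>2 + 2 * diameter W * path_length T v - (norm (v T - w T))\<^sup>2"
  using assms
proof (induction T rule: nat_induct_at_least)
  case base
  then show ?case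
    by (simp add: path_length_def)
next
  case (Suc n)
  have "(norm (v (Suc n) - w n))\<^sup>2 - (norm (v n - w n))\<^sup>2
      \<le> 2 * diameter W * norm (v (Suc n) - v n)"
    using Suc.hyps Suc.prems by (intro power2_norm_diff_le_diameter) auto
  moreover have "path_length (Suc n) v = path_length n v + norm (v (Suc n) - v n)"
    unfolding path_length_def using Suc.hyps by (simp add: sum.cl_ivl_Suc)
  ultimately show ?case
    using Suc by (simp add: sum.cl_ivl_Suc algebra_simps)
qed

lemma proximal_point_dynamic_regret:
  fixes F :: "nat \<Rightarrow> 'a::real_inner \<Rightarrow> real" and w v :: "nat \<Rightarrow> 'a"
  assumes "convex W" and "bounded W" and "eta > 0"
    and convex_F: "\<And>t. t \<in> {1..T} \<Longrightarrow> convex_on W (F t)"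
    and argmin: "\<And>t. t \<in> {1..T} \<Longrightarrow>
      is_arg_min (\<lambda>x. F t x + 1 / (2 * eta) * (norm (x - w (t - 1)))\<^sup>2) (\<lambda>x. x \<in> W) (w t)"
    and v: "\<And>t. t \<in> {1..T} \<Longrightarrow> v t \<in> W"
  shows "(\<Sum>t=1..T. F t (w t) - F t (v t))
    \<le> 1 / (2 * eta) * (norm (v 1 - w 0))\<^sup>2 + diameter W / eta * path_length T v"
proof (cases "T = 0")
  case True
  then show ?thesis
    using \<open>eta > 0\<close> by (simp add: path_length_def)
next
  case False
  define K where "K = 1 / (2 * eta)"
  have "K \<ge> 0"
    using \<open>eta > 0\<close> by (simp add: K_def)
  have w: "w t \<in> W" if "t \<in> {1..T}" for t
    using argmin[OF that] by (simp add: is_arg_min_def)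
  have step: "F t (w t) - F t (v t) \<le> K * ((norm (v t - w (t - 1)))\<^sup>2 - (norm (v t - w t))\<^sup>2)"
    if t: "t \<in> {1..T}" for t
    using is_arg_min_proximal_three_point[OF convex_F[OF t] \<open>convex W\<close> \<open>K \<ge> 0\<close>
        argmin[OF t, folded K_def] v[OF t]]
      mult_nonneg_nonneg[OF \<open>K \<ge> 0\<close> zero_le_power2[of "norm (w t - w (t - 1))"]]
    by (simp add: algebra_simps)
  have "(\<Sum>t=1..T. (norm (v t - w (t - 1)))\<^sup>2 - (norm (v t - w t))\<^sup>2)
      \<le> (norm (v 1 - w 0))\<^sup>2 + 2 * diameter W * path_length T v - (norm (v T - w T))\<^sup>2"
    using False \<open>bounded W\<close> v w by (intro sum_power2_norm_tracking_telescope) auto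
  then have telescope: "(\<Sum>t=1..T. (norm (v t - w (t - 1)))\<^sup>2 - (norm (v t - w t))\<^sup>2)
      \<le> (norm (v 1 - w 0))\<^sup>2 + 2 * diameter W * path_length T v"
    using zero_le_power2[of "norm (v T - w T)"] by linarith
  have "(\<Sum>t=1..T. F t (w t) - F t (v t))
      \<le> K * (\<Sum>t=1..T. (norm (v t - w (t - 1)))\<^sup>2 - (norm (v t - w t))\<^sup>2)"
    unfolding sum_distrib_left using step by (rule sum_mono)
  also have "\<dots> \<le> K * ((norm (v 1 - w 0))\<^sup>2 + 2 * diameter W * path_length T v)"
    using telescope \<open>K \<ge> 0\<close> by (rule mult_left_mono)
  also have "\<dots> = 1 / (2 * eta) * (norm (v 1 - w 0))\<^sup>2 + diameter W / eta * path_length T v"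
    using \<open>eta > 0\<close> by (simp add: K_def field_simps)
  finally show ?thesis .
qed

theorem theoremC2:
  fixes W :: "((real ^ 'l) \<times> (real ^ 's)) set"
    and lp ls eta :: real
    and T :: nat
    and f :: "nat \<Rightarrow> (real ^ 'l) \<times> (real ^ 's) \<Rightarrow> real"
    and c :: "nat \<Rightarrow> real ^ 'l"
    and w :: "nat \<Rightarrow> (real ^ 'l) \<times> (real ^ 's)"
  assumes closedW: "closed W" and convexW: "convex W" and boundedW: "bounded W"
    and lp: "lp \<ge> 0" and ls: "ls \<ge> 0"
    and fconv: "\<And>t. t \<in> {1..T} \<Longrightarrow> convex_on UNIV (f t)"
    and eta: "eta > 0"
    and w0: "w 0 \<in> W"
    and wt: "\<And>t. t \<in> {1..T} \<Longrightarrow>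
        is_arg_min (\<lambda>x. Floss lp ls (f t) (c t) x + 1 / (2 * eta) * (norm (x - w (t - 1)))\<^sup>2)
                   (\<lambda>x. x \<in> W) (w t)"
  shows "(\<forall>v :: nat \<Rightarrow> (real ^ 'l) \<times> (real ^ 's). (\<forall>t\<in>{1..T}. v t \<in> W) \<longrightarrow>
           (\<Sum>t=1..T. Floss lp ls (f t) (c t) (w t) - Floss lp ls (f t) (c t) (v t))
             \<le> 1 / (2 * eta) * (norm (v 1 - w 0))\<^sup>2 + diameter W / eta * path_length T v)
       \<and> (\<forall>ws :: nat \<Rightarrow> (real ^ 'l) \<times> (real ^ 's).
           (\<forall>t\<in>{1..T}. is_arg_min (Floss lp ls (f t) (c t)) (\<lambda>x. x \<in> W) (ws t)) \<longrightarrow>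
           (\<Sum>t=1..T. Floss lp ls (f t) (c t) (w t) - Floss lp ls (f t) (c t) (ws t))
             \<le> 1 / (2 * eta) * (norm (ws 1 - w 0))\<^sup>2 + diameter W / eta * path_length T ws)"
proof -
  have convex_F: "convex_on W (Floss lp ls (f t) (c t))" if "t \<in> {1..T}" for t
    using convex_on_subset[OF convex_on_Floss[OF fconv[OF that] lp ls] _ convexW] by simp
  have "\<forall>v. (\<forall>t\<in>{1..T}. v t \<in> W) \<longrightarrow>
      (\<Sum>t=1..T. Floss lp ls (f t) (c t) (w t) - Floss lp ls (f t) (c t) (v t))
        \<le> 1 / (2 * eta) * (norm (v 1 - w 0))\<^sup>2 + diameter W / eta * path_length T v"
    using proximal_point_dynamic_regret[where F = "\<lambda>t. Floss lp ls (f t) (c t)",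
        OF convexW boundedW eta convex_F wt]
    by blast
  moreover have "\<forall>t\<in>{1..T}. ws t \<in> W"
    if "\<forall>t\<in>{1..T}. is_arg_min (Floss lp ls (f t) (c t)) (\<lambda>x. x \<in> W) (ws t)" for ws
    using that by (simp add: is_arg_min_def)
  ultimately show ?thesis
    by blast
qed

end
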